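(* Let $X$ be a finite non-empty set and for every $a\in X$ let $\sigma_a,\tau_a:X\to X$ be maps with each $\sigma_a$ bijective (so that the special set-theoretic Yang–Baxter algebra ${\cal A}$ of these data is defined). Suppose $(X,+,0)$ is a group (not necessarily abelian) and $\sigma_{\sigma_a(b)}(\tau_b(a))=a$ for all $a,b\in X$. Define $a\circ b:=a+\sigma_a(b)$ for $a,b\in X$. \begin{enumerate} \item Then for all $a,b\in X$, $\sigma_a(b)\circ\tau_b(a)=-a+a\circ b+a$. \item If in addition $(X,\circ)$ is a semigroup and $\sigma_a(b+c)=\sigma_a(b)+\sigma_a(c)$ for all $a,b,c\in X$, then for all $a,b,c\in X$: (a) $\sigma_a(\sigma_b(c))=\sigma_{a\circ b}(c)$; (b) $(X,\circ,0)$ is a group; (c) $a\circ(b+c)=a\circ b-a+a\circ c$; (d) $\sigma_a(0)=0$, $\tau_0(a)=a$, $\sigma_0(a)=a$ and $\tau_a(0)=0$. \end{enumerate}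
   Context: The special set-theoretic Yang–Baxter algebra ${\cal A}$ is the unital associative algebra generated by $1_{\cal A},h_a,w_a,w_a^{-1}$ ($a\in X$) with relations $h_ah_b=\delta_{a,b}h_a$, $w_a^{-1}w_a=w_aw_a^{-1}=1_{\cal A}$, $w_aw_b=w_{\sigma_a(b)}w_{\tau_b(a)}$, $w_ah_b=h_{\sigma_a(b)}w_a$, where each $\sigma_a$ is a bijection; only the bijectivity of the $\sigma_a$ enters the statement. *)

theory Defs
  imports Main
begin

definition yb_circ :: "('a::group_add \<Rightarrow> 'a \<Rightarrow> 'a) \<Rightarrow> 'a \<Rightarrow> 'a \<Rightarrow> 'a" where
  "yb_circ \<sigma> a b = a + \<sigma> a b"

end

theory Submission
  imports Defs
begin

text \<open>Written out in \<open>(X,+)\<close>, associativity \<open>(a \<circ> b) \<circ> c = a \<circ> (b \<circ> c)\<close> reads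
  \<open>\<sigma>\<^sub>a(b) + \<sigma>\<^bsub>a \<circ> b\<^esub>(c) = \<sigma>\<^sub>a(b) + \<sigma>\<^sub>a(\<sigma>\<^sub>b(c))\<close> once \<open>\<sigma>\<^sub>a\<close> is additive, which is (a).
  Additivity forces \<open>\<sigma>\<^sub>a(0) = 0\<close>, so \<open>0\<close> is a right identity for \<open>\<circ>\<close>; then (a) with
  \<open>0 \<circ> 0 = 0\<close> and injectivity of \<open>\<sigma>\<^sub>0\<close> gives \<open>\<sigma>\<^sub>0 = id\<close>, so \<open>0\<close> is also a left identity.
  Surjectivity of \<open>\<sigma>\<^sub>a\<close> provides the right inverse \<open>\<sigma>\<^sub>a\<^sup>-\<^sup>1(-a)\<close>, and a monoid with right
  inverses is a group. The values of \<open>\<tau>\<close> at \<open>0\<close> follow from \<open>\<sigma>\<^bsub>\<sigma>\<^sub>a(b)\<^esub>(\<tau>\<^sub>b(a)) = a\<close>.\<close>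

lemma group_of_monoid_right_inverse:
  assumes "monoid f z" and right_inverse: "\<And>a. f a (i a) = z"
  shows "group f z i"
proof -
  interpret monoid f z by fact
  show ?thesis
  proof
    fix a
    have "f (i a) a = f (f (i a) a) (f (i a) (i (i a)))"
      by (simp add: right_inverse)
    also have "\<dots> = f (i a) (f (f a (i a)) (i (i a)))"
      by (simp add: assoc)
    also have "\<dots> = z"
      by (simp add: right_inverse)
    finally show "f (i a) a = z" .
  qed simp
qed

lemma additive_zero:
  fixes f :: "'a::group_add \<Rightarrow> 'b::group_add"
  assumes "\<And>b c. f (b + c) = f b + f c"
  shows "f 0 = 0"
proof -
  have "f 0 + f 0 = f 0 + 0"
    using assms[of 0 0] by simp
  then show ?thesis
    by (rule add_left_imp_eq)
qed

lemma yb_circ_sigma_tau: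
  assumes "\<sigma> (\<sigma> a b) (\<tau> b a) = a"
  shows "yb_circ \<sigma> (\<sigma> a b) (\<tau> b a) = - a + yb_circ \<sigma> a b + a"
  using assms by (simp add: yb_circ_def add.assoc)

lemma yb_circ_right_distrib:
  assumes "\<sigma> a (b + c) = \<sigma> a b + \<sigma> a c"
  shows "yb_circ \<sigma> a (b + c) = yb_circ \<sigma> a b - a + yb_circ \<sigma> a c"
  using assms by (simp add: yb_circ_def flip: add.assoc)

lemma sigma_yb_circ_of_assoc:
  assumes additive: "\<And>b c. \<sigma> a (b + c) = \<sigma> a b + \<sigma> a c"
    and assoc: "yb_circ \<sigma> (yb_circ \<sigma> a b) c = yb_circ \<sigma> a (yb_circ \<sigma> b c)"
  shows "\<sigma> a (\<sigma> b c) = \<sigma> (yb_circ \<sigma> a b) c"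
proof -
  have "a + \<sigma> a b + \<sigma> (yb_circ \<sigma> a b) c = a + \<sigma> a b + \<sigma> a (\<sigma> b c)"
    using assoc by (simp add: yb_circ_def additive add.assoc)
  then show ?thesis
    by simp
qed

lemma yb_circ_right_neutral:
  assumes "\<sigma> a 0 = 0"
  shows "yb_circ \<sigma> a 0 = a"
  using assms by (simp add: yb_circ_def)

lemma yb_circ_right_inverse:
  assumes "surj (\<sigma> a)"
  shows "yb_circ \<sigma> a (inv (\<sigma> a) (- a)) = 0"
  using assms by (simp add: yb_circ_def surj_f_inv_f)

lemma sigma_zero_eq_id:
  assumes "inj (\<sigma> 0)" and "\<sigma> 0 0 = 0"
    and compose: "\<And>c. \<sigma> 0 (\<sigma> 0 c) = \<sigma> (yb_circ \<sigma> 0 0) c"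
  shows "\<sigma> 0 c = c"
proof -
  have "yb_circ \<sigma> 0 0 = 0"
    using \<open>\<sigma> 0 0 = 0\<close> by (simp add: yb_circ_def)
  then have "\<sigma> 0 (\<sigma> 0 c) = \<sigma> 0 c"
    using compose by simp
  with \<open>inj (\<sigma> 0)\<close> show ?thesis
    by (rule injD)
qed

lemma yb_circ_monoid:
  assumes "semigroup (yb_circ \<sigma>)" and "\<And>a. \<sigma> a 0 = 0" and "\<And>c. \<sigma> 0 c = c"
  shows "monoid (yb_circ \<sigma>) 0"
proof (rule monoid.intro[OF assms(1)])
  show "monoid_axioms (yb_circ \<sigma>) 0"
  proof
    show "yb_circ \<sigma> 0 a = a" for a
      using assms(3) by (simp add: yb_circ_def)
    show "yb_circ \<sigma> a 0 = a" for a
      using assms(2) by (rule yb_circ_right_neutral)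
  qed
qed

lemma tau_zero_left:
  assumes "\<sigma> (\<sigma> a 0) (\<tau> 0 a) = a" and "\<sigma> a 0 = 0" and "\<And>c. \<sigma> 0 c = c"
  shows "\<tau> 0 a = a"
  using assms by simp

lemma tau_zero_right:
  assumes "inj (\<sigma> a)" and "\<sigma> (\<sigma> 0 a) (\<tau> a 0) = 0" and "\<sigma> a 0 = 0" and "\<And>c. \<sigma> 0 c = c"
  shows "\<tau> a 0 = 0"
proof -
  have "\<sigma> a (\<tau> a 0) = \<sigma> a 0"
    using assms(2-4) by simp
  with \<open>inj (\<sigma> a)\<close> show ?thesis
    by (rule injD)
qed

theorem theorem2p13:
  fixes \<sigma> \<tau> :: "'a::{finite, group_add} \<Rightarrow> 'a \<Rightarrow> 'a"
  assumes bij: "\<And>a. bij (\<sigma> a)"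
    and inv: "\<And>a b. \<sigma> (\<sigma> a b) (\<tau> b a) = a"
  shows "(\<forall>a b. yb_circ \<sigma> (\<sigma> a b) (\<tau> b a) = - a + yb_circ \<sigma> a b + a)
    \<and> (semigroup (yb_circ \<sigma>) \<and> (\<forall>a b c. \<sigma> a (b + c) = \<sigma> a b + \<sigma> a c) \<longrightarrow>
         (\<forall>a b c. \<sigma> a (\<sigma> b c) = \<sigma> (yb_circ \<sigma> a b) c)
       \<and> (\<exists>inv. group (yb_circ \<sigma>) 0 inv)
       \<and> (\<forall>a b c. yb_circ \<sigma> a (b + c) = yb_circ \<sigma> a b - a + yb_circ \<sigma> a c)
       \<and> (\<forall>a. \<sigma> a 0 = 0 \<and> \<tau> 0 a = a \<and> \<sigma> 0 a = a \<and> \<tau> a 0 = 0))"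
proof (intro conjI impI allI)
  show "yb_circ \<sigma> (\<sigma> a b) (\<tau> b a) = - a + yb_circ \<sigma> a b + a" for a b
    using inv by (rule yb_circ_sigma_tau)
  assume "semigroup (yb_circ \<sigma>) \<and> (\<forall>a b c. \<sigma> a (b + c) = \<sigma> a b + \<sigma> a c)"
  then have sg: "semigroup (yb_circ \<sigma>)" and additive: "\<And>a b c. \<sigma> a (b + c) = \<sigma> a b + \<sigma> a c"
    by auto
  show compose: "\<sigma> a (\<sigma> b c) = \<sigma> (yb_circ \<sigma> a b) c" for a b c
    using additive semigroup.assoc[OF sg] by (rule sigma_yb_circ_of_assoc)
  show sigma_zero: "\<sigma> a 0 = 0" for a
    using additive by (rule additive_zero)
  show sigma0: "\<sigma> 0 c = c" for c
    using bij_is_inj[OF bij] sigma_zero compose by (rule sigma_zero_eq_id)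
  have "group (yb_circ \<sigma>) 0 (\<lambda>a. inv (\<sigma> a) (- a))"
    using yb_circ_monoid[OF sg sigma_zero sigma0] yb_circ_right_inverse[OF bij_is_surj[OF bij]]
    by (rule group_of_monoid_right_inverse)
  then show "\<exists>inv. group (yb_circ \<sigma>) 0 inv"
    by blast
  show "yb_circ \<sigma> a (b + c) = yb_circ \<sigma> a b - a + yb_circ \<sigma> a c" for a b c
    using additive by (rule yb_circ_right_distrib)
  show "\<tau> 0 a = a" for a
    using inv sigma_zero sigma0 by (rule tau_zero_left)
  show "\<tau> a 0 = 0" for a
    using bij_is_inj[OF bij] inv sigma_zero sigma0 by (rule tau_zero_right)
qed

end
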